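(* Let $K$ be a cubical complex with $H^1(K;\mathbb{Z}/2\mathbb{Z})=0$. Then $K$ has a bicoloring.
   Context: A cubical poset is a poset $P$ in which every order ideal $\{z\in P: z\le x\}$ is isomorphic to a product of copies of $I$, where $I$ is the three-element face poset of an interval with the empty face excluded (two incomparable endpoints below a single maximum). A cubical complex is a (regular) cell complex whose face poset $P$ (excluding the empty face) is a cubical poset such that $P$ with a minimum and a maximum element adjoined is a lattice. A bicoloring of a complex is an assignment of one of two colors to each vertex such that every edge has one endpoint of each color (i.e., the 1-skeleton is bipartite with respect to the coloring). *)

theory Defs
  imports Main
begin

text \<open>I = {0,1,2} with 0 < 2 and 1 < 2 (two incomparable endpoints below a maximum).
  I^n is modelled as lists of length n over {0,1,2} with componentwise order.\<close>

definition I_le :: "nat \<Rightarrow> nat \<Rightarrow> bool" where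
  "I_le a b \<longleftrightarrow> a = b \<or> b = 2"

definition cube_elems :: "nat \<Rightarrow> nat list set" where
  "cube_elems n = {xs. length xs = n \<and> set xs \<subseteq> {0, 1, 2}}"

definition cube_le :: "nat list \<Rightarrow> nat list \<Rightarrow> bool" where
  "cube_le xs ys \<longleftrightarrow> list_all2 I_le xs ys"

definition order_ideal :: "'a set \<Rightarrow> 'a rel \<Rightarrow> 'a \<Rightarrow> 'a set" where
  "order_ideal P r x = {z \<in> P. (z, x) \<in> r}"

definition cell_dim :: "'a set \<Rightarrow> 'a rel \<Rightarrow> 'a \<Rightarrow> nat \<Rightarrow> bool" where
  "cell_dim P r x n \<longleftrightarrow> x \<in> P \<and>
     (\<exists>f. bij_betw f (order_ideal P r x) (cube_elems n) \<and>
          (\<forall>z \<in> order_ideal P r x. \<forall>w \<in> order_ideal P r x.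
              (z, w) \<in> r \<longleftrightarrow> cube_le (f z) (f w)))"

definition cubical_poset :: "'a set \<Rightarrow> 'a rel \<Rightarrow> bool" where
  "cubical_poset P r \<longleftrightarrow> partial_order_on P r \<and> (\<forall>x \<in> P. \<exists>n. cell_dim P r x n)"

datatype 'a bounded_ext = Bot | Elt 'a | Top

fun ext_le :: "'a rel \<Rightarrow> 'a bounded_ext \<Rightarrow> 'a bounded_ext \<Rightarrow> bool" where
  "ext_le r Bot _ = True"
| "ext_le r (Elt x) (Elt y) = ((x, y) \<in> r)"
| "ext_le r (Elt x) Top = True"
| "ext_le r (Elt x) Bot = False"
| "ext_le r Top y = (y = Top)"

definition ext_carrier :: "'a set \<Rightarrow> 'a bounded_ext set" where
  "ext_carrier P = {Bot, Top} \<union> Elt ` P"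

definition is_lattice_on :: "'b set \<Rightarrow> ('b \<Rightarrow> 'b \<Rightarrow> bool) \<Rightarrow> bool" where
  "is_lattice_on S le \<longleftrightarrow> (\<forall>x \<in> S. \<forall>y \<in> S.
     (\<exists>z \<in> S. le x z \<and> le y z \<and> (\<forall>w \<in> S. le x w \<and> le y w \<longrightarrow> le z w)) \<and>
     (\<exists>z \<in> S. le z x \<and> le z y \<and> (\<forall>w \<in> S. le w x \<and> le w y \<longrightarrow> le w z)))"

text \<open>A cubical complex, represented by its face poset (empty face excluded).
  Every cubical poset is a CW poset, hence the face poset of a regular CW complex,
  which is determined up to homeomorphism by the poset.\<close>
definition cubical_complex :: "'a set \<Rightarrow> 'a rel \<Rightarrow> bool" where
  "cubical_complex P r \<longleftrightarrow> cubical_poset P r \<and> is_lattice_on (ext_carrier P) (ext_le r)"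

definition cells :: "'a set \<Rightarrow> 'a rel \<Rightarrow> nat \<Rightarrow> 'a set" where
  "cells P r k = {x. cell_dim P r x k}"

text \<open>Cellular k-cochains with values in Z/2 (represented by bool, True = 1):
  functions on the k-cells. For a regular complex all incidence numbers between a
  cell and a codimension-one face are \<plusminus>1, i.e. 1 mod 2.\<close>
definition coboundary :: "'a set \<Rightarrow> 'a rel \<Rightarrow> nat \<Rightarrow> ('a \<Rightarrow> bool) \<Rightarrow> 'a \<Rightarrow> bool" where
  "coboundary P r k c y = odd (card {x \<in> cells P r k. (x, y) \<in> r \<and> c x})"

definition H1_Z2_vanishes :: "'a set \<Rightarrow> 'a rel \<Rightarrow> bool" where
  "H1_Z2_vanishes P r \<longleftrightarrow>
     (\<forall>c :: 'a \<Rightarrow> bool.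
        (\<forall>s \<in> cells P r 2. \<not> coboundary P r 1 c s) \<longrightarrow>
        (\<exists>f :: 'a \<Rightarrow> bool. \<forall>e \<in> cells P r 1. coboundary P r 0 f e = c e))"

definition bicoloring :: "'a set \<Rightarrow> 'a rel \<Rightarrow> ('a \<Rightarrow> bool) \<Rightarrow> bool" where
  "bicoloring P r col \<longleftrightarrow>
     (\<forall>e \<in> cells P r 1. \<forall>u \<in> cells P r 0. \<forall>v \<in> cells P r 0.
        (u, e) \<in> r \<and> (v, e) \<in> r \<and> u \<noteq> v \<longrightarrow> col u \<noteq> col v)"

end

theory Submission imports Defs begin

text \<open>The constant 1-cochain with value 1 is a cocycle, because every square has four edges.
  If \<open>H\<^sup>1(K; \<int>/2) = 0\<close> it is the coboundary of a 0-cochain \<open>col\<close>; since every edge has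
  exactly two vertices, \<open>\<delta>col(e) = 1\<close> says that exactly one endpoint of \<open>e\<close> has colour True.\<close>

definition cube_down :: "nat \<Rightarrow> nat list \<Rightarrow> nat list set" where
  "cube_down n w = {v \<in> cube_elems n. cube_le v w}"

lemma card_cube_elems: "card (cube_elems n) = 3 ^ n"
proof -
  have "cube_elems n = {xs. set xs \<subseteq> {0, 1, 2} \<and> length xs = n}"
    unfolding cube_elems_def by auto
  then show ?thesis by (simp add: card_lists_length_eq numeral_3_eq_3)
qed

lemma cube_elems_1: "cube_elems 1 = set [[0], [1], [2]]"
  unfolding cube_elems_def by (auto simp: length_Suc_conv)

lemma cube_elems_2:
  "cube_elems 2 = set [[0,0], [0,1], [0,2], [1,0], [1,1], [1,2], [2,0], [2,1], [2,2]]"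
  unfolding cube_elems_def by (auto simp: length_Suc_conv numeral_2_eq_2)

lemma card_vertices_of_interval: "card {w \<in> cube_elems 1. card (cube_down 1 w) = 3 ^ 0} = 2"
proof -
  have "{w \<in> cube_elems 1. card (cube_down 1 w) = 3 ^ 0} = {[0], [1]}"
    unfolding cube_down_def cube_elems_1 set_filter[symmetric]
    by (simp add: cube_le_def I_le_def)
  then show ?thesis by simp
qed

lemma card_edges_of_square: "card {w \<in> cube_elems 2. card (cube_down 2 w) = 3 ^ 1} = 4"
proof -
  have "{w \<in> cube_elems 2. card (cube_down 2 w) = 3 ^ 1} = {[0,2], [1,2], [2,0], [2,1]}"
    unfolding cube_down_def cube_elems_2 set_filter[symmetric]
    by (simp add: cube_le_def I_le_def)
  then show ?thesis by simp
qed

lemma card_order_ideal_cell: "cell_dim P r x n \<Longrightarrow> card (order_ideal P r x) = 3 ^ n"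
  unfolding cell_dim_def by (metis bij_betw_same_card card_cube_elems)

lemma cells_iff_card_order_ideal:
  assumes "cubical_poset P r"
  shows "x \<in> cells P r k \<longleftrightarrow> x \<in> P \<and> card (order_ideal P r x) = 3 ^ k"
proof
  assume "x \<in> P \<and> card (order_ideal P r x) = 3 ^ k"
  moreover obtain m where "cell_dim P r x m"
    using assms calculation unfolding cubical_poset_def by blast
  ultimately show "x \<in> cells P r k"
    using card_order_ideal_cell[of P r x m] by (simp add: cells_def)
qed (auto simp: cells_def cell_dim_def card_order_ideal_cell)

lemma image_order_ideal_cube_iso:
  assumes "trans r"
    and f: "bij_betw f (order_ideal P r x) (cube_elems n)"
    and iso: "\<forall>z \<in> order_ideal P r x. \<forall>w \<in> order_ideal P r x. (z, w) \<in> r \<longleftrightarrow> cube_le (f z) (f w)"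
    and z: "z \<in> order_ideal P r x"
  shows "f ` order_ideal P r z = cube_down n (f z)"
proof -
  have "order_ideal P r z = {z' \<in> order_ideal P r x. (z', z) \<in> r}"
    using z \<open>trans r\<close> unfolding order_ideal_def by (auto dest: transD)
  moreover have "f ` {z' \<in> order_ideal P r x. (z', z) \<in> r} = cube_down n (f z)"
  proof
    show "f ` {z' \<in> order_ideal P r x. (z', z) \<in> r} \<subseteq> cube_down n (f z)"
      using f iso z unfolding cube_down_def bij_betw_def by auto
  next
    show "cube_down n (f z) \<subseteq> f ` {z' \<in> order_ideal P r x. (z', z) \<in> r}"
    proof
      fix w assume w: "w \<in> cube_down n (f z)"
      then obtain z' where z': "z' \<in> order_ideal P r x" "w = f z'"
        using f unfolding cube_down_def bij_betw_def by auto
      with iso z w have "(z', z) \<in> r"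
        unfolding cube_down_def by auto
      with z' show "w \<in> f ` {z' \<in> order_ideal P r x. (z', z) \<in> r}"
        by auto
    qed
  qed
  ultimately show ?thesis by simp
qed

text \<open>The \<open>k\<close>-faces of an \<open>n\<close>-cell correspond to the elements of \<open>I\<^sup>n\<close> whose down-set
  is a copy of \<open>I\<^sup>k\<close>, recognised by its cardinality \<open>3\<^sup>k\<close>.\<close>

lemma card_faces_of_cell:
  assumes cub: "cubical_poset P r" and x: "x \<in> cells P r n"
  shows "card {z \<in> cells P r k. (z, x) \<in> r} = card {w \<in> cube_elems n. card (cube_down n w) = 3 ^ k}"
proof -
  let ?I = "order_ideal P r x"
  obtain f where f: "bij_betw f ?I (cube_elems n)"
    and iso: "\<forall>z \<in> ?I. \<forall>w \<in> ?I. (z, w) \<in> r \<longleftrightarrow> cube_le (f z) (f w)"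
    using x by (auto simp: cells_def cell_dim_def)
  have "trans r"
    using cub by (simp add: cubical_poset_def partial_order_on_def preorder_on_def)
  have inj: "inj_on f ?I"
    using f by (simp add: bij_betw_def)
  have card_ideal: "card (order_ideal P r z) = card (cube_down n (f z))" if "z \<in> ?I" for z
  proof -
    have "order_ideal P r z \<subseteq> ?I"
      using that \<open>trans r\<close> unfolding order_ideal_def by (auto dest: transD)
    then have "inj_on f (order_ideal P r z)"
      using inj inj_on_subset by blast
    then show ?thesis
      using image_order_ideal_cube_iso[OF \<open>trans r\<close> f iso that] card_image by metis
  qed
  let ?F = "{z \<in> ?I. card (cube_down n (f z)) = 3 ^ k}"
  have "{z \<in> cells P r k. (z, x) \<in> r} = {z \<in> ?I. card (order_ideal P r z) = 3 ^ k}"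
    using cells_iff_card_order_ideal[OF cub] unfolding order_ideal_def[of P r x] by blast
  also have "\<dots> = ?F"
    using card_ideal by (intro Collect_cong) auto
  finally have "card {z \<in> cells P r k. (z, x) \<in> r} = card (f ` ?F)"
    using card_image inj_on_subset[OF inj] by (metis (no_types, lifting) mem_Collect_eq subsetI)
  also have "f ` ?F = {w \<in> cube_elems n. card (cube_down n w) = 3 ^ k}"
    using f unfolding bij_betw_def by auto
  finally show ?thesis .
qed

lemma constant_cochain_is_cocycle:
  assumes "cubical_poset P r" and "s \<in> cells P r 2"
  shows "\<not> coboundary P r 1 (\<lambda>_. True) s"
  using card_faces_of_cell[OF assms, of 1, unfolded card_edges_of_square]
  by (simp add: coboundary_def)

lemma vertices_of_edge:
  assumes cub: "cubical_poset P r" and e: "e \<in> cells P r 1"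
    and u: "u \<in> cells P r 0" "(u, e) \<in> r" and v: "v \<in> cells P r 0" "(v, e) \<in> r" and "u \<noteq> v"
  shows "{z \<in> cells P r 0. (z, e) \<in> r} = {u, v}"
proof -
  let ?V = "{z \<in> cells P r 0. (z, e) \<in> r}"
  have card_V: "card ?V = 2"
    using card_faces_of_cell[OF cub e, of 0, unfolded card_vertices_of_interval] .
  then have "finite ?V"
    by (intro card_ge_0_finite) simp
  moreover have "{u, v} \<subseteq> ?V"
    using u v by auto
  moreover have "card {u, v} = card ?V"
    using card_V \<open>u \<noteq> v\<close> by simp
  ultimately show ?thesis
    by (rule card_subset_eq[symmetric])
qed

lemma bicoloring_if_coboundary_one:
  assumes cub: "cubical_poset P r"
    and col: "\<forall>e \<in> cells P r 1. coboundary P r 0 col e"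
  shows "bicoloring P r col"
  unfolding bicoloring_def
proof (intro ballI impI)
  fix e u v
  assume e: "e \<in> cells P r 1" and u: "u \<in> cells P r 0" and v: "v \<in> cells P r 0"
    and uv: "(u, e) \<in> r \<and> (v, e) \<in> r \<and> u \<noteq> v"
  have vertices: "{z \<in> cells P r 0. (z, e) \<in> r} = {u, v}"
    using uv by (intro vertices_of_edge[OF cub e u _ v]) auto
  have odd_colored: "odd (card {z \<in> {u, v}. col z})"
    using col e unfolding vertices[symmetric] by (simp add: coboundary_def conj_assoc)
  show "col u \<noteq> col v"
  proof
    assume "col u = col v"
    then have "{z \<in> {u, v}. col z} = (if col u then {u, v} else {})"
      by auto
    with odd_colored uv show False
      by (simp split: if_splits)
  qed
qed

theorem proposition2p1:
  fixes P :: "'a set" and r :: "'a rel"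
  assumes "cubical_complex P r"
    and "H1_Z2_vanishes P r"
  shows "\<exists>col :: 'a \<Rightarrow> bool. bicoloring P r col"
proof -
  have cub: "cubical_poset P r"
    using assms(1) by (simp add: cubical_complex_def)
  have "\<forall>s \<in> cells P r 2. \<not> coboundary P r 1 (\<lambda>_. True) s"
    using constant_cochain_is_cocycle[OF cub] by blast
  moreover have "(\<forall>s \<in> cells P r 2. \<not> coboundary P r 1 (\<lambda>_. True) s) \<longrightarrow>
      (\<exists>col. \<forall>e \<in> cells P r 1. coboundary P r 0 col e = True)"
    using assms(2) unfolding H1_Z2_vanishes_def by (rule spec)
  ultimately obtain col where "\<forall>e \<in> cells P r 1. coboundary P r 0 col e"
    by auto
  then show ?thesis
    using bicoloring_if_coboundary_one[OF cub] by blast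
qed

end
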